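(* Consider $\mathrm{DSS}(n,k,d,1,\alpha,\alpha',\beta,M)$ operating at the MBR point, i.e. $\alpha=(d+1)\beta$ and $M=\sum_{i=0}^{k-1}(d+1-i)\beta$, and suppose that under every sequence of failures/repairs (each repair using $\beta$ packets from each of $d$ surviving complete nodes and from the single repairing node) every $k$ complete nodes can reconstruct the file. Then $\alpha'\ge k\beta$.
   Context: $\mathrm{DSS}(n,k,d,h,\alpha,\alpha',\beta,M)$: a file of $M$ packets is stored on $n$ complete storage nodes of capacity $\alpha$ each so that any $k$ of them reconstruct the file; in addition there are $h$ repairing storage nodes of capacity $\alpha'<\alpha$, which never fail and are never contacted by data collectors. When a complete node fails, a new node is created from $\beta$ packets received from each of $d$ surviving complete nodes and from each of the $h$ repairing nodes; repair is functional. Quantities $\alpha,\alpha',\beta$ are nonnegative integers. *)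

theory Defs
  imports Main
begin

text \<open>Packets are elements of a finite alphabet 'p (at least two symbols).  A configuration is a pair (c, r):
  c i f is the content (list of packets) of complete node i (i < n) when the file is f,
  r f is the content of the single repairing node.  Contents are arbitrary (deterministic)
  functions of the file; repair is functional.\<close>

definition files :: "nat \<Rightarrow> 'p list set" where
  "files M = {xs. length xs = M}"

type_synonym 'p config = "(nat \<Rightarrow> 'p list \<Rightarrow> 'p list) \<times> ('p list \<Rightarrow> 'p list)"

definition valid_config :: "nat \<Rightarrow> nat \<Rightarrow> nat \<Rightarrow> nat \<Rightarrow> 'p config \<Rightarrow> bool" where
  "valid_config n \<alpha> \<alpha>' M cr \<longleftrightarrow>
     (\<forall>i<n. \<forall>f\<in>files M. length (fst cr i f) = \<alpha>) \<and>
     (\<forall>f\<in>files M. length (snd cr f) = \<alpha>')"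

definition reconstructs :: "nat \<Rightarrow> nat \<Rightarrow> nat \<Rightarrow> 'p config \<Rightarrow> bool" where
  "reconstructs n k M cr \<longleftrightarrow>
     (\<forall>K. K \<subseteq> {..<n} \<longrightarrow> card K = k \<longrightarrow>
        (\<forall>f\<in>files M. \<forall>g\<in>files M. (\<forall>i\<in>K. fst cr i f = fst cr i g) \<longrightarrow> f = g))"

definition repaired :: "'p config \<Rightarrow> nat \<Rightarrow> nat set \<Rightarrow> (nat \<Rightarrow> 'p list \<Rightarrow> 'p list)
    \<Rightarrow> ('p list \<Rightarrow> 'p list) \<Rightarrow> ('p list \<Rightarrow> 'p list) \<Rightarrow> 'p config" where
  "repaired cr j H msg msg0 dec =
     ((fst cr)(j := (\<lambda>f. dec (concat (map (\<lambda>i. msg i (fst cr i f)) (sorted_list_of_set H))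
                              @ msg0 (snd cr f)))),
      snd cr)"

text \<open>A DSS that keeps working under every sequence of failures/repairs: there is a
  nonempty set S of configurations (the configurations reachable under the repair strategy),
  all of which respect the storage constraints and the reconstruction property, such that for
  every configuration in S, every failed node j and every choice of d surviving helpers, there
  is a repair (beta packets from each helper and from the repairing node) leading back into S.\<close>
definition working_DSS :: "nat \<Rightarrow> nat \<Rightarrow> nat \<Rightarrow> nat \<Rightarrow> nat \<Rightarrow> nat \<Rightarrow> nat \<Rightarrow> 'p config set \<Rightarrow> bool" where
  "working_DSS n k d \<alpha> \<alpha>' \<beta> M S \<longleftrightarrow>
     S \<noteq> {} \<and>
     (\<forall>cr\<in>S. valid_config n \<alpha> \<alpha>' M cr \<and> reconstructs n k M cr) \<and>
     (\<forall>cr\<in>S. \<forall>j<n. \<forall>H. H \<subseteq> {..<n} - {j} \<longrightarrow> card H = d \<longrightarrow>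
        (\<exists>msg msg0 dec.
           (\<forall>i\<in>H. \<forall>f\<in>files M. length (msg i (fst cr i f)) = \<beta>) \<and>
           (\<forall>f\<in>files M. length (msg0 (snd cr f)) = \<beta>) \<and>
           repaired cr j H msg msg0 dec \<in> S))"

end

theory Submission
  imports Defs
begin

(* Start from any configuration and repair nodes 0, 1, ..., k-1 one after the other,
   node t using the helpers {0..d} - {t} and the repairing node.  Call the contents of
   nodes < t together with the repairing node the view after t steps.  The repaired node t
   is a function of the old view and of the (d - t) * beta packets sent by helpers t+1..d,
   so each step multiplies the number of possible views (as the file ranges over all files)
   by at most q^((d-t)*beta), where q is the alphabet size.  Hence after k steps at most
   q^(alpha' + sum_{t<k} (d-t)*beta) views occur.  But nodes 0..k-1 reconstruct the file,
   so the view after k steps is injective on the q^M files.  Comparing exponents at the MBR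
   file size M = sum_{t<k} (d+1-t)*beta gives alpha' >= k * beta. *)

lemma files_as_lists: "files M = {xs. set xs \<subseteq> (UNIV :: 'p set) \<and> length xs = M}"
  unfolding files_def by auto

lemma finite_files: "finite (files M :: ('p::finite) list set)"
  unfolding files_as_lists by (rule finite_lists_length_eq) simp

lemma card_files: "card (files M :: ('p::finite) list set) = card (UNIV :: 'p set) ^ M"
  unfolding files_as_lists by (rule card_lists_length_eq) simp

lemma card_image_le_if_determined:
  assumes "finite A" and det: "\<And>f g. f \<in> A \<Longrightarrow> g \<in> A \<Longrightarrow> Q f = Q g \<Longrightarrow> F f = F g"
  shows "card (F ` A) \<le> card (Q ` A)"
proof -
  have "F f = F (inv_into A Q (Q f))" if "f \<in> A" for f
    using det[OF that inv_into_into[of "Q f" Q A]] that by (simp add: f_inv_into_f)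
  then have "F ` A = (\<lambda>x. F (inv_into A Q x)) ` (Q ` A)"
    by (simp add: image_image)
  then show ?thesis
    by (metis assms(1) card_image_le finite_imageI)
qed

lemma card_image_le_mult:
  assumes "finite A" "finite B" and Y: "Y ` A \<subseteq> B"
    and det: "\<And>f g. f \<in> A \<Longrightarrow> g \<in> A \<Longrightarrow> P f = P g \<Longrightarrow> Y f = Y g \<Longrightarrow> F f = F g"
  shows "card (F ` A) \<le> card (P ` A) * card B"
proof -
  have pairs: "(\<lambda>f. (P f, Y f)) ` A \<subseteq> P ` A \<times> B"
    using Y by blast
  have "card (F ` A) \<le> card ((\<lambda>f. (P f, Y f)) ` A)"
    using det by (intro card_image_le_if_determined[OF \<open>finite A\<close>]) blast
  also have "\<dots> \<le> card (P ` A \<times> B)"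
    by (rule card_mono[OF _ pairs]) (simp add: assms(1,2))
  also have "\<dots> = card (P ` A) * card B"
    by (simp add: card_cartesian_product)
  finally show ?thesis .
qed

lemma length_concat_map_const:
  assumes "\<And>i. i \<in> set xs \<Longrightarrow> length (g i) = b"
  shows "length (concat (map g xs)) = length xs * b"
  using assms by (induction xs) auto

definition view :: "'p config \<Rightarrow> nat \<Rightarrow> 'p list \<Rightarrow> (nat \<Rightarrow> 'p list) \<times> 'p list" where
  "view cr t f = ((\<lambda>i. if i < t then fst cr i f else []), snd cr f)"

lemma view_eqD:
  assumes "view cr t f = view cr t g" "i < t"
  shows "fst cr i f = fst cr i g"
  using fun_cong[OF arg_cong[where f=fst, OF assms(1)], of i] assms(2) by (simp add: view_def)

lemma card_view_0:
  fixes cr :: "('p::finite) config"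
  assumes "valid_config n \<alpha> \<alpha>' M cr"
  shows "card (view cr 0 ` files M) \<le> card (UNIV :: 'p set) ^ \<alpha>'"
proof -
  have "card (view cr 0 ` files M) \<le> card (snd cr ` files M)"
    by (rule card_image_le_if_determined[OF finite_files]) (simp add: view_def)
  also have "\<dots> \<le> card (files \<alpha>' :: 'p list set)"
    using assms by (intro card_mono finite_files) (auto simp: valid_config_def files_def)
  finally show ?thesis by (simp add: card_files)
qed

lemma sorted_list_of_helpers:
  assumes "t \<le> d"
  shows "sorted_list_of_set ({..d} - {t}) = [0..<t] @ [Suc t..<Suc d]"
proof -
  have "set ([0..<t] @ [Suc t..<Suc d]) = {..d} - {t}" using assms by auto
  moreover have "sorted ([0..<t] @ [Suc t..<Suc d])" and "distinct ([0..<t] @ [Suc t..<Suc d])"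
    by (auto simp: sorted_append)
  ultimately show ?thesis
    by (metis sorted_list_of_set.idem_if_sorted_distinct)
qed

text \<open>The new content of node t depends only on the old view (nodes
  below t, the repairing node) and on the messages of the helpers t+1..d.\<close>
lemma repair_step:
  fixes S :: "('p::finite) config set"
  assumes W: "working_DSS n k d \<alpha> \<alpha>' \<beta> M S" and "t < d" "d < n" and cr: "cr \<in> S"
  shows "\<exists>cr'\<in>S. card (view cr' (Suc t) ` files M)
                  \<le> card (view cr t ` files M) * card (UNIV :: 'p set) ^ ((d - t) * \<beta>)"
proof -
  define H where "H = {..d} - {t}"
  have helpers: "H \<subseteq> {..<n} - {t}" "card H = d" and "t < n"
    using assms(2,3) by (auto simp: H_def card_Diff_singleton)
  obtain msg msg0 dec where
    msg: "\<forall>i\<in>H. \<forall>f\<in>files M. length (msg i (fst cr i f)) = \<beta>" and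
    inS: "repaired cr t H msg msg0 dec \<in> S"
    using W[unfolded working_DSS_def, THEN conjunct2, THEN conjunct2, rule_format,
            OF cr \<open>t < n\<close> helpers] by blast
  define cr' where "cr' = repaired cr t H msg msg0 dec"
  define Y where "Y f = concat (map (\<lambda>i. msg i (fst cr i f)) [Suc t..<Suc d])" for f
  have Y: "Y ` files M \<subseteq> files ((d - t) * \<beta>)"
  proof
    fix y assume "y \<in> Y ` files M"
    then obtain f where f: "f \<in> files M" and y: "y = Y f" by blast
    have "length (Y f) = length [Suc t..<Suc d] * \<beta>"
      unfolding Y_def by (rule length_concat_map_const) (use msg f in \<open>auto simp: H_def\<close>)
    then show "y \<in> files ((d - t) * \<beta>)" using y by (simp add: files_def del: upt_Suc)
  qed
  have old_nodes: "fst cr' i = fst cr i" if "i \<noteq> t" for i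
    using that by (simp add: cr'_def repaired_def)
  have repairing_node: "snd cr' = snd cr"
    by (simp add: cr'_def repaired_def)
  have new_node: "fst cr' t f
      = dec (concat (map (\<lambda>i. msg i (fst cr i f)) [0..<t]) @ Y f @ msg0 (snd cr f))" for f
    using assms(2) by (simp add: cr'_def repaired_def H_def sorted_list_of_helpers Y_def del: upt_Suc)
  have determined: "view cr' (Suc t) f = view cr' (Suc t) g"
    if same_view: "view cr t f = view cr t g" and same_msgs: "Y f = Y g" for f g
  proof -
    have below: "fst cr i f = fst cr i g" if "i < t" for i
      using view_eqD[OF same_view that] .
    have "fst cr' i f = fst cr' i g" if "i < Suc t" for i
    proof (cases "i = t")
      case True
      have same_repairing_node: "snd cr f = snd cr g"
        using same_view by (simp add: view_def)
      have same_msgs_below: "map (\<lambda>i. msg i (fst cr i f)) [0..<t] = map (\<lambda>i. msg i (fst cr i g)) [0..<t]"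
        using below by simp
      show ?thesis
        by (simp only: True new_node same_msgs_below same_msgs same_repairing_node)
    next
      case False
      then show ?thesis using that below old_nodes by simp
    qed
    then show ?thesis
      using same_view repairing_node by (simp add: view_def fun_eq_iff)
  qed
  have "card (view cr' (Suc t) ` files M)
          \<le> card (view cr t ` files M) * card (files ((d - t) * \<beta>) :: 'p list set)"
    using determined by (intro card_image_le_mult[OF finite_files finite_files Y])
  then show ?thesis using inS unfolding cr'_def card_files by blast
qed

lemma card_view_bound:
  fixes S :: "('p::finite) config set"
  assumes W: "working_DSS n k d \<alpha> \<alpha>' \<beta> M S" and "t \<le> d" "d < n"
  shows "\<exists>cr\<in>S. card (view cr t ` files M) \<le> card (UNIV :: 'p set) ^ (\<alpha>' + (\<Sum>i<t. (d - i) * \<beta>))"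
  using \<open>t \<le> d\<close>
proof (induction t)
  case 0
  obtain cr where "cr \<in> S" "valid_config n \<alpha> \<alpha>' M cr"
    using W unfolding working_DSS_def by blast
  then show ?case using card_view_0 by fastforce
next
  case (Suc t)
  then obtain cr where cr: "cr \<in> S"
    and IH: "card (view cr t ` files M) \<le> card (UNIV :: 'p set) ^ (\<alpha>' + (\<Sum>i<t. (d - i) * \<beta>))"
    by auto
  obtain cr' where "cr' \<in> S"
    and step: "card (view cr' (Suc t) ` files M)
                 \<le> card (view cr t ` files M) * card (UNIV :: 'p set) ^ ((d - t) * \<beta>)"
    using repair_step[OF W Suc_le_lessD[OF Suc.prems] \<open>d < n\<close> cr] by blast
  have "card (view cr' (Suc t) ` files M)
          \<le> card (UNIV :: 'p set) ^ (\<alpha>' + (\<Sum>i<t. (d - i) * \<beta>)) * card (UNIV :: 'p set) ^ ((d - t) * \<beta>)"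
    using step IH by (meson le_trans mult_le_mono1)
  also have "\<dots> = card (UNIV :: 'p set) ^ (\<alpha>' + (\<Sum>i<Suc t. (d - i) * \<beta>))"
    by (simp add: power_add add.assoc)
  finally show ?case using \<open>cr' \<in> S\<close> by blast
qed

lemma inj_on_view:
  assumes "reconstructs n k M cr" "k \<le> n"
  shows "inj_on (view cr k) (files M)"
proof (rule inj_onI)
  fix f g assume "f \<in> files M" "g \<in> files M" "view cr k f = view cr k g"
  moreover have "\<forall>i\<in>{..<k}. fst cr i f = fst cr i g"
    using view_eqD \<open>view cr k f = view cr k g\<close> by blast
  ultimately show "f = g"
    using assms unfolding reconstructs_def by (metis card_lessThan lessThan_subset_iff)
qed

lemma MBR_file_size:
  fixes k d \<beta> :: nat
  assumes "k \<le> d"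
  shows "(\<Sum>i<k. (d + 1 - i) * \<beta>) = (\<Sum>i<k. (d - i) * \<beta>) + k * \<beta>"
proof -
  have "(\<Sum>i<k. (d + 1 - i) * \<beta>) = (\<Sum>i<k. (d - i) * \<beta> + \<beta>)"
  proof (rule sum.cong)
    fix i assume "i \<in> {..<k}"
    then have "d + 1 - i = Suc (d - i)" using assms by simp
    then show "(d + 1 - i) * \<beta> = (d - i) * \<beta> + \<beta>" by simp
  qed simp
  then show ?thesis by (simp add: sum.distrib)
qed

text \<open>The counting argument uses only the MBR file size.\<close>
theorem lemma3:
  fixes n k d \<alpha> \<alpha>' \<beta> M :: nat and S :: "('p::finite) config set"
  assumes "card (UNIV :: 'p set) \<ge> 2"
    and "1 \<le> k" and "k \<le> d" and "d < n"
    and "\<alpha>' < \<alpha>"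
    and "\<alpha> = (d + 1) * \<beta>"
    and "M = (\<Sum>i<k. (d + 1 - i) * \<beta>)"
    and "working_DSS n k d \<alpha> \<alpha>' \<beta> M S"
  shows "\<alpha>' \<ge> k * \<beta>"
proof -
  let ?q = "card (UNIV :: 'p set)"
  obtain cr where "cr \<in> S"
    and bound: "card (view cr k ` files M) \<le> ?q ^ (\<alpha>' + (\<Sum>i<k. (d - i) * \<beta>))"
    using card_view_bound[OF assms(8,3,4)] by blast
  then have "reconstructs n k M cr"
    using assms(8) unfolding working_DSS_def by blast
  then have "inj_on (view cr k) (files M)"
    by (rule inj_on_view) (use assms(3,4) in simp)
  then have "card (view cr k ` files M) = ?q ^ M"
    by (simp add: card_image card_files)
  then have "M \<le> \<alpha>' + (\<Sum>i<k. (d - i) * \<beta>)"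
    using bound assms(1) by (simp add: power_le_imp_le_exp)
  then show ?thesis
    using MBR_file_size[OF assms(3)] assms(7) by simp
qed

end
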